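(* Let voters (and their proposals) be points of $[0,1]$, distributed according to the uniform distribution, with density $f(x)=1$ on $[0,1]$. Each voter prefers, between two proposals, the one closer to its own position. Consider one round of Triadic voting: three voters $X_1,X_2,X_3$ are drawn independently from the uniform distribution on $[0,1]$. Each voter votes for whichever of the other two proposals is closer to it, and the proposal receiving the most votes wins. Let $g_{\text{Triadic}}(x)$ denote the probability density of the winning proposal's position. Consider one round of Hot-or-Not voting: two candidate proposals $X, Y$ and one voter $Z$ are drawn independently from the uniform distribution on $[0,1]$. The voter $Z$ votes for whichever of $X,Y$ is closer to $Z$, and that proposal wins. Let $g_{\text{Hot-or-Not}}(x)$ denote the probability density of the winning proposal's position. Then, for $x\in[0,1]$, \[ g_{\text{Triadic}}(x)=6x(1-x), \qquad g_{\text{Hot-or-Not}}(x)=3x(1-x)+\tfrac12 . \] In particular, \[ g_{\text{Hot-or-Not}}(x)=\tfrac12 g_{\text{Triadic}}(x)+\tfrac12 f(x). \]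
   Context: This is a one-dimensional (single-peaked) model of proposals: each voter's opinion is a real number in $[0,1]$, and each voter's proposal is that same number. A voter at position $z$ prefers proposal $a$ to proposal $b$ if $|z-a|<|z-b|$. Ties occur with probability zero. *)

theory Defs
  imports "HOL-Probability.Probability"
begin

definition unif01 :: "real measure" where
  "unif01 = uniform_measure lborel {0..1}"

definition votes_for :: "(nat \<Rightarrow> real) \<Rightarrow> nat \<Rightarrow> nat" where
  "votes_for p j = card {i \<in> {0,1,2}. i \<noteq> j \<and>
      \<bar>p i - p j\<bar> < \<bar>p i - p (3 - i - j)\<bar>}"

text \<open>Winner of one Triadic round: the proposal with the most votes
  (ties, a null event, are broken arbitrarily in favour of the later index).\<close>
definition triadic_winner :: "real \<Rightarrow> real \<Rightarrow> real \<Rightarrow> real" where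
  "triadic_winner x1 x2 x3 =
     (let p = (\<lambda>i. if i = 0 then x1 else if i = 1 then x2 else x3) in
      if votes_for p 0 > votes_for p 1 \<and> votes_for p 0 > votes_for p 2 then x1
      else if votes_for p 1 > votes_for p 2 then x2 else x3)"

text \<open>Winner of one Hot-or-Not round: candidates x, y, voter z
  (ties, a null event, go to y).\<close>
definition hot_or_not_winner :: "real \<Rightarrow> real \<Rightarrow> real \<Rightarrow> real" where
  "hot_or_not_winner x y z = (if \<bar>z - x\<bar> < \<bar>z - y\<bar> then x else y)"

end

theory Submission
  imports Defs
begin

(*
  Off a null set the Triadic winner is the median of the three positions: each extreme
  voter is nearer to the middle proposal than to the opposite extreme, so the middle one
  gets two votes.  Hence the winner is at most a iff at least two of three independent
  uniform points are, which has probability 3a^2 - 2a^3.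

  In Hot-or-Not the winner is at most a surely if both candidates x, y are, never if
  neither is, and otherwise iff the voter falls on the lower candidate's side of the
  midpoint (x + y)/2, an event of probability (x + y)/2.  Integrating over the candidates
  gives the distribution function a/2 + 3a^2/2 - a^3.  Differentiating both distribution
  functions yields the densities.
*)

abbreviation unif01_cube :: "(real \<times> real \<times> real) measure" where
  "unif01_cube \<equiv> unif01 \<Otimes>\<^sub>M (unif01 \<Otimes>\<^sub>M unif01)"

lemma unif01_eq_density: "unif01 = density lborel (indicator {0..1})"
  unfolding unif01_def uniform_measure_def by (simp add: divide_ennreal_def)

lemma sets_unif01 [measurable_cong]: "sets unif01 = sets borel"
  by (simp add: unif01_eq_density)

lemma space_unif01 [simp]: "space unif01 = UNIV"
  by (simp add: unif01_eq_density)

lemma prob_space_unif01: "prob_space unif01"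
  unfolding unif01_def by (rule prob_space_uniform_measure) auto

lemma nn_integral_unif01:
  "f \<in> borel_measurable borel \<Longrightarrow> (\<integral>\<^sup>+x. f x \<partial>unif01) = (\<integral>\<^sup>+x\<in>{0..1}. f x \<partial>lborel)"
  by (simp add: unif01_eq_density nn_integral_density mult.commute)

lemma nn_integral_unif01_cube:
  assumes [measurable]: "h \<in> borel_measurable unif01_cube"
  shows "(\<integral>\<^sup>+w. h w \<partial>unif01_cube) =
    (\<integral>\<^sup>+x\<in>{0..1}. \<integral>\<^sup>+y\<in>{0..1}. \<integral>\<^sup>+z\<in>{0..1}. h (x, y, z) \<partial>lborel \<partial>lborel \<partial>lborel)"
proof -
  interpret U: prob_space unif01 by (rule prob_space_unif01)
  interpret UU: prob_space "unif01 \<Otimes>\<^sub>M unif01" by (intro prob_space_pair prob_space_unif01)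
  have "(\<integral>\<^sup>+w. h w \<partial>unif01_cube) =
      (\<integral>\<^sup>+x. \<integral>\<^sup>+y. \<integral>\<^sup>+z. h (x, y, z) \<partial>unif01 \<partial>unif01 \<partial>unif01)"
    by (subst UU.nn_integral_fst[symmetric], measurable)
       (intro nn_integral_cong U.nn_integral_fst[symmetric], measurable)
  also have "\<dots> = (\<integral>\<^sup>+x\<in>{0..1}. \<integral>\<^sup>+y\<in>{0..1}. \<integral>\<^sup>+z\<in>{0..1}. h (x, y, z) \<partial>lborel \<partial>lborel \<partial>lborel)"
    by (subst nn_integral_unif01, measurable,
        intro nn_integral_cong arg_cong2[where f = "(*)"] refl nn_integral_unif01, measurable)+
  finally show ?thesis .
qed

lemma set_nn_integral_indicator_atMost:
  assumes "{z \<in> A. W z \<le> a} \<in> sets M"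
  shows "(\<integral>\<^sup>+z\<in>A. indicator {..a} (W z) \<partial>M) = emeasure M {z \<in> A. W z \<le> a}"
proof -
  have "(\<integral>\<^sup>+z\<in>A. indicator {..a} (W z) \<partial>M) = (\<integral>\<^sup>+z. indicator {z \<in> A. W z \<le> a} z \<partial>M)"
    by (intro nn_integral_cong) (simp split: split_indicator)
  with assms show ?thesis
    by simp
qed

lemma emeasure_unif01_cube_le:
  fixes X :: "real \<times> real \<times> real \<Rightarrow> real"
  assumes [measurable]: "X \<in> borel_measurable unif01_cube"
  shows "emeasure unif01_cube {w \<in> space unif01_cube. X w \<le> a} =
    (\<integral>\<^sup>+x\<in>{0..1}. \<integral>\<^sup>+y\<in>{0..1}. \<integral>\<^sup>+z\<in>{0..1}. indicator {..a} (X (x, y, z)) \<partial>lborel \<partial>lborel \<partial>lborel)"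
proof -
  have "{w \<in> space unif01_cube. X w \<le> a} \<in> sets unif01_cube"
    by measurable
  then have "emeasure unif01_cube {w \<in> space unif01_cube. X w \<le> a} =
      (\<integral>\<^sup>+w. indicator {w \<in> space unif01_cube. X w \<le> a} w \<partial>unif01_cube)"
    by simp
  also have "\<dots> = (\<integral>\<^sup>+w. indicator {..a} (X w) \<partial>unif01_cube)"
    by (intro nn_integral_cong) (simp split: split_indicator)
  finally show ?thesis
    by (simp add: nn_integral_unif01_cube)
qed

lemma distributed_of_cdf_Icc:
  fixes X :: "'a \<Rightarrow> real" and p G :: "real \<Rightarrow> real"
  assumes "prob_space M" and [measurable]: "X \<in> borel_measurable M" "p \<in> borel_measurable borel"
    and "c \<le> d"
    and p_nonneg: "\<And>x. x \<in> {c..d} \<Longrightarrow> 0 \<le> p x"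
    and G_deriv: "\<And>x. x \<in> {c..d} \<Longrightarrow> (G has_real_derivative p x) (at x)"
    and "G c = 0" "G d = 1"
    and cdf: "\<And>a. a \<in> {c..d} \<Longrightarrow> emeasure M {w \<in> space M. X w \<le> a} = ennreal (G a)"
  shows "distributed M lborel X (\<lambda>x. ennreal (indicator {c..d} x * p x))"
proof (rule distributedI_borel_atMost[where g = "\<lambda>a. G (max c (min d a))"])
  show "AE x in lborel. 0 \<le> indicator {c..d} x * p x"
    using p_nonneg by (simp split: split_indicator)
  fix a :: real
  show "(\<integral>\<^sup>+x. ennreal (indicator {c..d} x * p x * indicator {..a} x) \<partial>lborel) =
      ennreal (G (max c (min d a)))"
  proof (cases "a < c")
    case True
    then have "(\<integral>\<^sup>+x. ennreal (indicator {c..d} x * p x * indicator {..a} x) \<partial>lborel) =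
        (\<integral>\<^sup>+(x::real). 0 \<partial>lborel)"
      by (intro nn_integral_cong) (simp split: split_indicator)
    with True \<open>G c = 0\<close> show ?thesis by simp
  next
    case False
    let ?s = "min d a"
    have "(\<integral>\<^sup>+x. ennreal (indicator {c..d} x * p x * indicator {..a} x) \<partial>lborel) =
        (\<integral>\<^sup>+x\<in>{c..?s}. ennreal (p x) \<partial>lborel)"
      by (intro nn_integral_cong) (simp split: split_indicator)
    also have "\<dots> = ennreal (G ?s - G c)"
      using False \<open>c \<le> d\<close> p_nonneg G_deriv by (intro nn_integral_FTC_Icc) auto
    finally show ?thesis
      using False \<open>c \<le> d\<close> \<open>G c = 0\<close> by (simp add: max_def)
  qed
  interpret prob_space M by fact
  consider "a < c" | "a \<in> {c..d}" | "d < a" by force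
  then show "emeasure M {w \<in> space M. X w \<le> a} = ennreal (G (max c (min d a)))"
  proof cases
    case 1
    then have "emeasure M {w \<in> space M. X w \<le> a} \<le> emeasure M {w \<in> space M. X w \<le> c}"
      by (intro emeasure_mono) auto
    also have "\<dots> = 0"
      using cdf[of c] \<open>c \<le> d\<close> \<open>G c = 0\<close> by simp
    finally show ?thesis
      using 1 \<open>G c = 0\<close> by simp
  next
    case 2
    then show ?thesis
      using cdf by simp
  next
    case 3
    have "1 = emeasure M {w \<in> space M. X w \<le> d}"
      using cdf[of d] \<open>c \<le> d\<close> \<open>G d = 1\<close> by simp
    also have "\<dots> \<le> emeasure M {w \<in> space M. X w \<le> a}"
      using 3 by (intro emeasure_mono) auto
    finally have "emeasure M {w \<in> space M. X w \<le> a} = 1"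
      using emeasure_le_1 by (rule antisym[rotated])
    with 3 \<open>c \<le> d\<close> \<open>G d = 1\<close> show ?thesis
      by simp
  qed
qed simp_all

lemma nn_integral_Icc_piecewise:
  fixes f g F G :: "real \<Rightarrow> real"
  assumes "c \<le> a" "a \<le> d"
    and f: "f \<in> borel_measurable borel" and g: "g \<in> borel_measurable borel"
    and F: "\<And>x. x \<in> {c..a} \<Longrightarrow> (F has_real_derivative f x) (at x)" "\<And>x. x \<in> {c..a} \<Longrightarrow> 0 \<le> f x"
    and G: "\<And>x. x \<in> {a..d} \<Longrightarrow> (G has_real_derivative g x) (at x)" "\<And>x. x \<in> {a..d} \<Longrightarrow> 0 \<le> g x"
    and v: "v = F a - F c + (G d - G a)"
  shows "(\<integral>\<^sup>+x\<in>{c..d}. ennreal (if x \<le> a then f x else g x) \<partial>lborel) = ennreal v"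
proof -
  have "(\<integral>\<^sup>+x\<in>{c..d}. ennreal (if x \<le> a then f x else g x) \<partial>lborel) =
      (\<integral>\<^sup>+x. ennreal (f x) * indicator {c..a} x + ennreal (g x) * indicator {a..d} x \<partial>lborel)"
    using \<open>c \<le> a\<close> \<open>a \<le> d\<close>
    by (intro nn_integral_cong_AE eventually_mono[OF AE_lborel_singleton[of a]])
       (auto split: split_indicator)
  also have "\<dots> = (\<integral>\<^sup>+x\<in>{c..a}. ennreal (f x) \<partial>lborel) + (\<integral>\<^sup>+x\<in>{a..d}. ennreal (g x) \<partial>lborel)"
    using f g by (intro nn_integral_add) auto
  also have "\<dots> = ennreal (F a - F c) + ennreal (G d - G a)"
    by (simp only: nn_integral_FTC_Icc[OF f F \<open>c \<le> a\<close>] nn_integral_FTC_Icc[OF g G \<open>a \<le> d\<close>])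
  also have "\<dots> = ennreal v"
  proof -
    have "F c \<le> F a"
      using \<open>c \<le> a\<close> by (rule DERIV_nonneg_imp_nondecreasing) (meson F atLeastAtMost_iff)
    moreover have "G a \<le> G d"
      using \<open>a \<le> d\<close> by (rule DERIV_nonneg_imp_nondecreasing) (meson G atLeastAtMost_iff)
    ultimately show ?thesis
      using v by simp
  qed
  finally show ?thesis .
qed

lemma abs_diff_less_abs_diff_iff:
  fixes x y z :: real
  shows "\<bar>z - x\<bar> < \<bar>z - y\<bar> \<longleftrightarrow> x < y \<and> z < (x + y) / 2 \<or> y < x \<and> (x + y) / 2 < z"
  by (auto simp: abs_if)

lemma borel_measurable_hot_or_not_winner [measurable]:
  "(\<lambda>(x, y, z). hot_or_not_winner x y z) \<in> borel_measurable unif01_cube"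
  unfolding hot_or_not_winner_def by measurable

lemma hot_or_not_winner_le_given_xy:
  assumes "x \<in> {0..1}" "y \<in> {0..1}"
  shows "(\<integral>\<^sup>+z\<in>{0..1}. indicator {..a} (hot_or_not_winner x y z) \<partial>lborel) =
    ennreal (if x \<le> a \<and> y \<le> a then 1 else if x \<le> a \<or> y \<le> a then (x + y) / 2 else 0)"
proof -
  let ?Z = "{z \<in> {0..1}. hot_or_not_winner x y z \<le> a}"
  have "?Z \<in> sets lborel"
    unfolding hot_or_not_winner_def by measurable
  then have "(\<integral>\<^sup>+z\<in>{0..1}. indicator {..a} (hot_or_not_winner x y z) \<partial>lborel) = emeasure lborel ?Z"
    by (rule set_nn_integral_indicator_atMost)
  also have "?Z = (if x \<le> a \<and> y \<le> a then {0..1} else if x \<le> a then {0..<(x + y) / 2}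
      else if y \<le> a then {0..(x + y) / 2} else {})"
    using assms by (auto simp: hot_or_not_winner_def abs_diff_less_abs_diff_iff)
  finally show ?thesis
    using assms by simp
qed

lemma hot_or_not_winner_le_given_x:
  assumes "a \<in> {0..1}" "x \<in> {0..1}"
  shows "(\<integral>\<^sup>+y\<in>{0..1}. \<integral>\<^sup>+z\<in>{0..1}. indicator {..a} (hot_or_not_winner x y z) \<partial>lborel \<partial>lborel) =
    ennreal (if x \<le> a then a + x * (1 - a) / 2 + (1 - a\<^sup>2) / 4 else x * a / 2 + a\<^sup>2 / 4)"
proof (cases "x \<le> a")
  case True
  then have "(\<integral>\<^sup>+y\<in>{0..1}. \<integral>\<^sup>+z\<in>{0..1}. indicator {..a} (hot_or_not_winner x y z) \<partial>lborel \<partial>lborel) =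
      (\<integral>\<^sup>+y\<in>{0..1}. ennreal (if y \<le> a then 1 else (x + y) / 2) \<partial>lborel)"
    using assms(2) by (intro set_nn_integral_cong refl) (simp add: hot_or_not_winner_le_given_xy)
  also have "\<dots> = ennreal (a + x * (1 - a) / 2 + (1 - a\<^sup>2) / 4)"
    by (rule nn_integral_Icc_piecewise[where F = "\<lambda>y. y" and G = "\<lambda>y. (x * y + y\<^sup>2 / 2) / 2"])
       (use assms in \<open>auto intro!: derivative_eq_intros\<close>, simp add: field_simps)
  finally show ?thesis
    using True by simp
next
  case False
  then have "(\<integral>\<^sup>+y\<in>{0..1}. \<integral>\<^sup>+z\<in>{0..1}. indicator {..a} (hot_or_not_winner x y z) \<partial>lborel \<partial>lborel) =
      (\<integral>\<^sup>+y\<in>{0..1}. ennreal (if y \<le> a then (x + y) / 2 else 0) \<partial>lborel)"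
    using assms(2) by (intro set_nn_integral_cong refl) (simp add: hot_or_not_winner_le_given_xy)
  also have "\<dots> = ennreal (x * a / 2 + a\<^sup>2 / 4)"
    by (rule nn_integral_Icc_piecewise[where F = "\<lambda>y. (x * y + y\<^sup>2 / 2) / 2" and G = "\<lambda>y. 0"])
       (use assms in \<open>auto intro!: derivative_eq_intros\<close>)
  finally show ?thesis
    using False by simp
qed

lemma emeasure_hot_or_not_winner_le:
  assumes a: "a \<in> {0..1}"
  shows "emeasure unif01_cube {w \<in> space unif01_cube. (\<lambda>(x, y, z). hot_or_not_winner x y z) w \<le> a} =
    ennreal (3 * a\<^sup>2 / 2 - a ^ 3 + a / 2)"
proof -
  have "emeasure unif01_cube {w \<in> space unif01_cube. (\<lambda>(x, y, z). hot_or_not_winner x y z) w \<le> a} =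
      (\<integral>\<^sup>+x\<in>{0..1}. ennreal (if x \<le> a then a + x * (1 - a) / 2 + (1 - a\<^sup>2) / 4 else x * a / 2 + a\<^sup>2 / 4) \<partial>lborel)"
    using a by (simp add: emeasure_unif01_cube_le)
       (intro set_nn_integral_cong refl, simp add: hot_or_not_winner_le_given_x)
  also have "\<dots> = ennreal (3 * a\<^sup>2 / 2 - a ^ 3 + a / 2)"
  proof (rule nn_integral_Icc_piecewise[where F = "\<lambda>x. a * x + x\<^sup>2 * (1 - a) / 4 + (1 - a\<^sup>2) * x / 4"
        and G = "\<lambda>x. x\<^sup>2 * a / 4 + a\<^sup>2 * x / 4"])
    show "0 \<le> a + x * (1 - a) / 2 + (1 - a\<^sup>2) / 4" if "x \<in> {0..a}" for x
      using a that by (auto intro!: add_nonneg_nonneg mult_nonneg_nonneg power_le_one)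
  qed (use a in \<open>auto intro!: derivative_eq_intros\<close>, simp add: field_simps power2_eq_square power3_eq_cube)
  finally show ?thesis .
qed

lemma distributed_hot_or_not_winner:
  "distributed unif01_cube lborel (\<lambda>(x, y, z). hot_or_not_winner x y z)
     (\<lambda>x. ennreal (indicator {0..1} x * (3 * x * (1 - x) + 1 / 2)))"
proof (rule distributed_of_cdf_Icc[where G = "\<lambda>a. 3 * a\<^sup>2 / 2 - a ^ 3 + a / 2"])
  show "((\<lambda>a. 3 * a\<^sup>2 / 2 - a ^ 3 + a / 2) has_real_derivative 3 * x * (1 - x) + 1 / 2) (at x)" for x :: real
    by (auto intro!: derivative_eq_intros simp: algebra_simps power2_eq_square)
  show "prob_space unif01_cube"
    by (intro prob_space_pair prob_space_unif01)
  show "0 \<le> 3 * x * (1 - x) + 1 / 2" if "x \<in> {0..1}" for x :: real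
    using that by simp
qed (simp_all add: emeasure_hot_or_not_winner_le)

lemma votes_for_eq:
  "votes_for p j = (\<Sum>i\<in>{0, 1, 2} - {j}. of_bool (\<bar>p i - p j\<bar> < \<bar>p i - p (3 - i - j)\<bar>))"
  unfolding votes_for_def by (simp add: Int_def)

lemma votes_for_simps:
  "votes_for p 0 = of_bool (\<bar>p 1 - p 0\<bar> < \<bar>p 1 - p 2\<bar>) + of_bool (\<bar>p 2 - p 0\<bar> < \<bar>p 2 - p 1\<bar>)"
  "votes_for p 1 = of_bool (\<bar>p 0 - p 1\<bar> < \<bar>p 0 - p 2\<bar>) + of_bool (\<bar>p 2 - p 1\<bar> < \<bar>p 2 - p 0\<bar>)"
  "votes_for p 2 = of_bool (\<bar>p 0 - p 2\<bar> < \<bar>p 0 - p 1\<bar>) + of_bool (\<bar>p 1 - p 2\<bar> < \<bar>p 1 - p 0\<bar>)"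
  by (simp_all add: votes_for_eq insert_Diff_if)

lemma borel_measurable_triadic_winner [measurable]:
  "(\<lambda>(x1, x2, x3). triadic_winner x1 x2 x3) \<in> borel_measurable unif01_cube"
  unfolding triadic_winner_def Let_def votes_for_simps by (simp split del: if_split) measurable

definition median3 :: "'a::linorder \<Rightarrow> 'a \<Rightarrow> 'a \<Rightarrow> 'a" where
  "median3 x y z = max (min x y) (min (max x y) z)"

lemma median3_le_iff: "median3 x y z \<le> a \<longleftrightarrow> x \<le> a \<and> y \<le> a \<or> x \<le> a \<and> z \<le> a \<or> y \<le> a \<and> z \<le> a"
  unfolding median3_def by (auto simp: min_le_iff_disj)

lemma triadic_winner_eq_median3:
  assumes "x \<noteq> y" "y \<noteq> z" "x \<noteq> z"
  shows "triadic_winner x y z = median3 x y z"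
proof -
  consider "x < y" "y < z" | "x < z" "z < y" | "y < x" "x < z" | "y < z" "z < x" | "z < x" "x < y" | "z < y" "y < x"
    using assms by (metis linorder_neqE_linordered_idom)
  then show ?thesis
    unfolding triadic_winner_def Let_def votes_for_simps
    by cases (simp_all add: median3_def)
qed

lemma median3_le_given_xy:
  assumes "a \<in> {0..1}"
  shows "(\<integral>\<^sup>+z\<in>{0..1}. indicator {..a} (median3 x y z) \<partial>lborel) =
    ennreal (if x \<le> a \<and> y \<le> a then 1 else if x \<le> a \<or> y \<le> a then a else 0)"
proof -
  let ?Z = "{z \<in> {0..1}. median3 x y z \<le> a}"
  have "?Z \<in> sets lborel"
    unfolding median3_def by measurable
  then have "(\<integral>\<^sup>+z\<in>{0..1}. indicator {..a} (median3 x y z) \<partial>lborel) = emeasure lborel ?Z"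
    by (rule set_nn_integral_indicator_atMost)
  also have "?Z = (if x \<le> a \<and> y \<le> a then {0..1} else if x \<le> a \<or> y \<le> a then {0..a} else {})"
    using assms by (auto simp: median3_le_iff)
  finally show ?thesis
    using assms by simp
qed

lemma triadic_winner_le_given_x:
  assumes "a \<in> {0..1}"
  shows "(\<integral>\<^sup>+y\<in>{0..1}. \<integral>\<^sup>+z\<in>{0..1}. indicator {..a} (triadic_winner x y z) \<partial>lborel \<partial>lborel) =
    ennreal (if x \<le> a then a + a * (1 - a) else a\<^sup>2)"
proof -
  have "(\<integral>\<^sup>+y\<in>{0..1}. \<integral>\<^sup>+z\<in>{0..1}. indicator {..a} (triadic_winner x y z) \<partial>lborel \<partial>lborel) =
      (\<integral>\<^sup>+y\<in>{0..1}. \<integral>\<^sup>+z\<in>{0..1}. indicator {..a} (median3 x y z) \<partial>lborel \<partial>lborel)"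
  proof (intro nn_integral_cong_AE eventually_mono[OF AE_lborel_singleton[of x]])
    fix y assume "y \<noteq> x"
    have "AE z in lborel. triadic_winner x y z = median3 x y z"
      using eventually_conj[OF AE_lborel_singleton[of x] AE_lborel_singleton[of y]]
      by (rule eventually_mono) (use \<open>y \<noteq> x\<close> in \<open>auto intro!: triadic_winner_eq_median3\<close>)
    then show "(\<integral>\<^sup>+z\<in>{0..1}. indicator {..a} (triadic_winner x y z) \<partial>lborel) * indicator {0..1} y =
        (\<integral>\<^sup>+z\<in>{0..1}. indicator {..a} (median3 x y z) \<partial>lborel) * indicator {0..1} y"
      by (intro arg_cong2[where f = "(*)"] nn_integral_cong_AE refl) (auto elim!: eventually_mono)
  qed
  also have "\<dots> = (\<integral>\<^sup>+y\<in>{0..1}. ennreal (if x \<le> a \<and> y \<le> a then 1 else if x \<le> a \<or> y \<le> a then a else 0) \<partial>lborel)"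
    using assms by (intro set_nn_integral_cong refl) (simp add: median3_le_given_xy)
  also have "\<dots> = ennreal (if x \<le> a then a + a * (1 - a) else a\<^sup>2)"
  proof (cases "x \<le> a")
    case True
    then have "(\<integral>\<^sup>+y\<in>{0..1}. ennreal (if x \<le> a \<and> y \<le> a then 1 else if x \<le> a \<or> y \<le> a then a else 0) \<partial>lborel) =
        (\<integral>\<^sup>+y\<in>{0..1}. ennreal (if y \<le> a then 1 else a) \<partial>lborel)"
      by (intro nn_integral_cong) simp
    also have "\<dots> = ennreal (a + a * (1 - a))"
      by (rule nn_integral_Icc_piecewise[where F = "\<lambda>y. y" and G = "\<lambda>y. a * y"])
         (use assms in \<open>auto intro!: derivative_eq_intros simp: algebra_simps\<close>)
    finally show ?thesis
      using True by simp
  next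
    case False
    then have "(\<integral>\<^sup>+y\<in>{0..1}. ennreal (if x \<le> a \<and> y \<le> a then 1 else if x \<le> a \<or> y \<le> a then a else 0) \<partial>lborel) =
        (\<integral>\<^sup>+y\<in>{0..1}. ennreal (if y \<le> a then a else 0) \<partial>lborel)"
      by (intro nn_integral_cong) simp
    also have "\<dots> = ennreal (a\<^sup>2)"
      by (rule nn_integral_Icc_piecewise[where F = "\<lambda>y. a * y" and G = "\<lambda>y. 0"])
         (use assms in \<open>auto intro!: derivative_eq_intros simp: power2_eq_square\<close>)
    finally show ?thesis
      using False by simp
  qed
  finally show ?thesis .
qed

lemma emeasure_triadic_winner_le:
  assumes a: "a \<in> {0..1}"
  shows "emeasure unif01_cube {w \<in> space unif01_cube. (\<lambda>(x1, x2, x3). triadic_winner x1 x2 x3) w \<le> a} =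
    ennreal (3 * a\<^sup>2 - 2 * a ^ 3)"
proof -
  have "emeasure unif01_cube {w \<in> space unif01_cube. (\<lambda>(x1, x2, x3). triadic_winner x1 x2 x3) w \<le> a} =
      (\<integral>\<^sup>+x\<in>{0..1}. ennreal (if x \<le> a then a + a * (1 - a) else a\<^sup>2) \<partial>lborel)"
    using a by (simp add: emeasure_unif01_cube_le triadic_winner_le_given_x)
  also have "\<dots> = ennreal (3 * a\<^sup>2 - 2 * a ^ 3)"
  proof (rule nn_integral_Icc_piecewise[where F = "\<lambda>x. (a + a * (1 - a)) * x" and G = "\<lambda>x. a\<^sup>2 * x"])
    show "0 \<le> a + a * (1 - a)" if "x \<in> {0..a}" for x
      using a by (auto intro!: add_nonneg_nonneg mult_nonneg_nonneg)
  qed (use a in \<open>auto intro!: derivative_eq_intros simp: algebra_simps power2_eq_square power3_eq_cube\<close>)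
  finally show ?thesis .
qed

lemma distributed_triadic_winner:
  "distributed unif01_cube lborel (\<lambda>(x1, x2, x3). triadic_winner x1 x2 x3)
     (\<lambda>x. ennreal (indicator {0..1} x * (6 * x * (1 - x))))"
proof (rule distributed_of_cdf_Icc[where G = "\<lambda>a. 3 * a\<^sup>2 - 2 * a ^ 3"])
  show "((\<lambda>a. 3 * a\<^sup>2 - 2 * a ^ 3) has_real_derivative 6 * x * (1 - x)) (at x)" for x :: real
    by (auto intro!: derivative_eq_intros simp: algebra_simps power2_eq_square)
  show "prob_space unif01_cube"
    by (intro prob_space_pair prob_space_unif01)
qed (simp_all add: emeasure_triadic_winner_le)

theorem theorem1:
  shows "distributed (unif01 \<Otimes>\<^sub>M (unif01 \<Otimes>\<^sub>M unif01)) lborel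
           (\<lambda>(x1, x2, x3). triadic_winner x1 x2 x3)
           (\<lambda>x. ennreal (indicator {0..1} x * (6 * x * (1 - x))))
       \<and> distributed (unif01 \<Otimes>\<^sub>M (unif01 \<Otimes>\<^sub>M unif01)) lborel
           (\<lambda>(x, y, z). hot_or_not_winner x y z)
           (\<lambda>x. ennreal (indicator {0..1} x * (3 * x * (1 - x) + 1 / 2)))
       \<and> (\<forall>x::real \<in> {0..1}. 3 * x * (1 - x) + 1 / 2
                = 1 / 2 * (6 * x * (1 - x)) + 1 / 2 * 1)"
  using distributed_triadic_winner distributed_hot_or_not_winner by (simp add: algebra_simps)

end
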